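(* Let $I$ be a finite set of cardinality $n+1$ and let $(G,(K_{\{i\}})_{i\in I})$ be a subgroup geometry system with coset complex $X$. Then the symmetrization $X^{\circledast S_I}=\circledast_{\pi\in S_I}\pi(X)$ is isomorphic (as an $(n+1)$-partite clique complex) to the coset complex $X\bigl(G^{(n+1)!},(\prod_{\pi\in S_I}K_{\{\pi(i)\}})_{i\in I}\bigr)$, and $\bigl(G^{(n+1)!},(\prod_{\pi\in S_I}K_{\{\pi(i)\}})_{i\in I}\bigr)$ is a subgroup geometry system.
   Context: Subgroup geometry system: with $K_\tau=\bigcap_{i\in\tau}K_{\{i\}}$ ($\tau\ne\emptyset$), $K_\emptyset=G$: (A1) $K_{\tau\cap\tau'}=\langle K_\tau,K_{\tau'}\rangle$ for all $\tau,\tau'\subseteq I$; (A2) $K_\tau K_{\{i\}}=\bigcap_{j\in\tau}K_{\{j\}}K_{\{i\}}$ for $\tau\subsetneq I$, $i\in I\setminus\tau$; (A3) $K_I\ne K_{I\setminus\{i\}}$ for every $i$. Coset complex $X(G,(K_{\{i\}})_{i\in I})$: vertices are cosets $gK_{\{i\}}$, the part $V^i$ being the cosets of $K_{\{i\}}$; $gK_{\{i\}}\sim g'K_{\{j\}}$ iff $i\ne j$ and they intersect; $X$ is the clique complex of this $(n+1)$-partite graph. Partite product of $(n+1)$-partite graphs $G_1,G_2$ with parts $(V_1^i)_{i\in I},(V_2^i)_{i\in I}$: parts $(V_1^i\times V_2^i)_{i\in I}$, with $(a,b)\in V_1^i\times V_2^i$ adjacent to $(c,d)\in V_1^j\times V_2^j$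 ($i\ne j$) iff $\{a,c\}\in E_1$ and $\{b,d\}\in E_2$; the product of clique complexes is the clique complex of the product graph. For a permutation $\pi$ of $I$, $\pi(X)$ is the same graph with parts relabelled so that its $i$-th part is $V^{\pi(i)}$. $\prod_{\pi\in S_I}K_{\{\pi(i)\}}$ is the direct product subgroup of $G^{S_I}\cong G^{(n+1)!}$. *)

theory Defs
  imports "HOL-Algebra.Algebra" "HOL-Combinatorics.Permutations"
begin

definition Ktau :: "('g, 'b) monoid_scheme \<Rightarrow> ('i \<Rightarrow> 'g set) \<Rightarrow> 'i set \<Rightarrow> 'g set" where
  "Ktau G K \<tau> = (if \<tau> = {} then carrier G else (\<Inter>i\<in>\<tau>. K i))"

definition subgroup_geometry_system ::
    "('g, 'b) monoid_scheme \<Rightarrow> 'i set \<Rightarrow> ('i \<Rightarrow> 'g set) \<Rightarrow> bool" where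
  "subgroup_geometry_system G I K \<longleftrightarrow>
     group G \<and> finite I \<and> (\<forall>i\<in>I. subgroup (K i) G) \<and>
     (\<forall>\<tau> \<tau>'. \<tau> \<subseteq> I \<longrightarrow> \<tau>' \<subseteq> I \<longrightarrow>
        Ktau G K (\<tau> \<inter> \<tau>') = generate G (Ktau G K \<tau> \<union> Ktau G K \<tau>')) \<and>
     (\<forall>\<tau> i. \<tau> \<subset> I \<longrightarrow> i \<in> I - \<tau> \<longrightarrow>
        Ktau G K \<tau> <#>\<^bsub>G\<^esub> K i = carrier G \<inter> (\<Inter>j\<in>\<tau>. K j <#>\<^bsub>G\<^esub> K i)) \<and>
     (\<forall>i\<in>I. Ktau G K I \<noteq> Ktau G K (I - {i}))"

text \<open>A partite graph: family of parts indexed by I, and an adjacency relation.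
  Its clique complex is determined by it.\<close>
type_synonym ('i, 'v) partite_graph = "('i \<Rightarrow> 'v set) \<times> ('v \<Rightarrow> 'v \<Rightarrow> bool)"

text \<open>Coset complex (as its 1-skeleton): vertices of part i are the cosets g K_i, tagged by i.\<close>
definition coset_graph :: "('g, 'b) monoid_scheme \<Rightarrow> ('i \<Rightarrow> 'g set) \<Rightarrow> ('i, 'i \<times> 'g set) partite_graph" where
  "coset_graph G K =
     ((\<lambda>i. {(i, g <#\<^bsub>G\<^esub> K i) | g. g \<in> carrier G}),
      (\<lambda>u v. fst u \<noteq> fst v \<and> snd u \<inter> snd v \<noteq> {}))"

definition relabel :: "('i \<Rightarrow> 'i) \<Rightarrow> ('i, 'v) partite_graph \<Rightarrow> ('i, 'v) partite_graph" where
  "relabel p Gr = ((\<lambda>i. fst Gr (p i)), snd Gr)"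

definition partite_prod :: "'i set \<Rightarrow> 's set \<Rightarrow> ('s \<Rightarrow> ('i, 'v) partite_graph)
     \<Rightarrow> ('i, 's \<Rightarrow> 'v) partite_graph" where
  "partite_prod I S Gr =
     ((\<lambda>i. \<Pi>\<^sub>E s\<in>S. fst (Gr s) i),
      (\<lambda>f g. (\<exists>i\<in>I. \<exists>j\<in>I. i \<noteq> j \<and> f \<in> (\<Pi>\<^sub>E s\<in>S. fst (Gr s) i) \<and> g \<in> (\<Pi>\<^sub>E s\<in>S. fst (Gr s) j))
             \<and> (\<forall>s\<in>S. snd (Gr s) (f s) (g s))))"

definition symmetrization :: "'i set \<Rightarrow> ('i, 'v) partite_graph \<Rightarrow> ('i, ('i \<Rightarrow> 'i) \<Rightarrow> 'v) partite_graph" where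
  "symmetrization I Gr = partite_prod I {p. p permutes I} (\<lambda>p. relabel p Gr)"

definition partite_iso :: "'i set \<Rightarrow> ('i, 'v) partite_graph \<Rightarrow> ('i, 'w) partite_graph \<Rightarrow> ('v \<Rightarrow> 'w) \<Rightarrow> bool" where
  "partite_iso I Gr Hr \<phi> \<longleftrightarrow>
     (\<forall>i\<in>I. bij_betw \<phi> (fst Gr i) (fst Hr i)) \<and>
     inj_on \<phi> (\<Union>i\<in>I. fst Gr i) \<and>
     (\<forall>u\<in>(\<Union>i\<in>I. fst Gr i). \<forall>v\<in>(\<Union>i\<in>I. fst Gr i). snd Gr u v \<longleftrightarrow> snd Hr (\<phi> u) (\<phi> v))"

end

theory Submission
  imports Defs
begin

text \<open>Each relabelled complex \<open>\<pi>(X)\<close> is, up to retagging its vertices, the coset complex of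
  the subgroups \<open>K (\<pi> i)\<close> of \<open>G\<close>, which again form a subgroup geometry system. Coset complexes
  and the axioms (A1)--(A3) commute with direct products over a finite nonempty index set \<open>S\<close>:
  cosets, products of subsets and generated subgroups of the product group are computed
  coordinatewise (the last because \<open>S\<close> is finite, so that the product is generated by the
  images of the coordinate embeddings), and (A3) survives because \<open>S\<close> is nonempty.\<close>

lemma PiE_image:
  "(\<Pi>\<^sub>E s\<in>S. f s ` A s) = (\<lambda>a. \<lambda>s\<in>S. f s (a s)) ` (\<Pi>\<^sub>E s\<in>S. A s)"
proof
  show "(\<Pi>\<^sub>E s\<in>S. f s ` A s) \<subseteq> (\<lambda>a. \<lambda>s\<in>S. f s (a s)) ` (\<Pi>\<^sub>E s\<in>S. A s)"
  proof
    fix u assume u: "u \<in> (\<Pi>\<^sub>E s\<in>S. f s ` A s)"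
    then obtain a where a: "\<forall>s\<in>S. a s \<in> A s \<and> u s = f s (a s)"
      unfolding PiE_iff image_iff by metis
    then have "u = (\<lambda>s\<in>S. f s (restrict a S s))"
      using u by (auto simp: PiE_iff extensional_def)
    moreover have "restrict a S \<in> (\<Pi>\<^sub>E s\<in>S. A s)"
      using a by simp
    ultimately show "u \<in> (\<lambda>a. \<lambda>s\<in>S. f s (a s)) ` (\<Pi>\<^sub>E s\<in>S. A s)"
      by blast
  qed
qed auto

lemma bij_betw_PiE:
  assumes "\<And>s. s \<in> S \<Longrightarrow> bij_betw (f s) (A s) (B s)"
  shows "bij_betw (\<lambda>a. \<lambda>s\<in>S. f s (a s)) (\<Pi>\<^sub>E s\<in>S. A s) (\<Pi>\<^sub>E s\<in>S. B s)"
proof (rule bij_betw_imageI)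
  show "inj_on (\<lambda>a. \<lambda>s\<in>S. f s (a s)) (\<Pi>\<^sub>E s\<in>S. A s)"
  proof (rule inj_onI)
    fix a b assume a: "a \<in> (\<Pi>\<^sub>E s\<in>S. A s)" and b: "b \<in> (\<Pi>\<^sub>E s\<in>S. A s)"
      and eq: "(\<lambda>s\<in>S. f s (a s)) = (\<lambda>s\<in>S. f s (b s))"
    have "a s = b s" if "s \<in> S" for s
      using fun_cong[OF eq, of s] a b assms[OF that] that by (auto simp: bij_betw_def inj_on_def)
    then show "a = b"
      using a b by (intro extensionalityI[where A=S]) (auto simp: PiE_iff)
  qed
  show "(\<lambda>a. \<lambda>s\<in>S. f s (a s)) ` (\<Pi>\<^sub>E s\<in>S. A s) = (\<Pi>\<^sub>E s\<in>S. B s)"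
    using assms by (simp add: PiE_image[symmetric] bij_betw_def cong: PiE_cong)
qed

lemma set_mult_PiE_product_group:
  "(\<Pi>\<^sub>E s\<in>S. A s) <#>\<^bsub>product_group S G\<^esub> (\<Pi>\<^sub>E s\<in>S. B s) = (\<Pi>\<^sub>E s\<in>S. A s <#>\<^bsub>G s\<^esub> B s)"
proof
  show "(\<Pi>\<^sub>E s\<in>S. A s) <#>\<^bsub>product_group S G\<^esub> (\<Pi>\<^sub>E s\<in>S. B s) \<subseteq> (\<Pi>\<^sub>E s\<in>S. A s <#>\<^bsub>G s\<^esub> B s)"
    unfolding set_mult_def by (force simp: PiE_iff)
next
  show "(\<Pi>\<^sub>E s\<in>S. A s <#>\<^bsub>G s\<^esub> B s) \<subseteq> (\<Pi>\<^sub>E s\<in>S. A s) <#>\<^bsub>product_group S G\<^esub> (\<Pi>\<^sub>E s\<in>S. B s)"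
  proof
    fix x assume x: "x \<in> (\<Pi>\<^sub>E s\<in>S. A s <#>\<^bsub>G s\<^esub> B s)"
    then have "\<forall>s\<in>S. \<exists>a b. a \<in> A s \<and> b \<in> B s \<and> x s = a \<otimes>\<^bsub>G s\<^esub> b"
      by (simp add: set_mult_def PiE_iff) meson
    then obtain a b where ab: "\<forall>s\<in>S. a s \<in> A s \<and> b s \<in> B s \<and> x s = a s \<otimes>\<^bsub>G s\<^esub> b s"
      by metis
    then have "x = restrict a S \<otimes>\<^bsub>product_group S G\<^esub> restrict b S"
      using x by (auto simp: PiE_iff extensional_def)
    moreover have "restrict a S \<in> (\<Pi>\<^sub>E s\<in>S. A s)" "restrict b S \<in> (\<Pi>\<^sub>E s\<in>S. B s)"
      using ab by auto
    ultimately show "x \<in> (\<Pi>\<^sub>E s\<in>S. A s) <#>\<^bsub>product_group S G\<^esub> (\<Pi>\<^sub>E s\<in>S. B s)"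
      unfolding set_mult_def by blast
  qed
qed

lemma l_coset_PiE_product_group:
  assumes "g \<in> extensional S"
  shows "g <#\<^bsub>product_group S G\<^esub> (\<Pi>\<^sub>E s\<in>S. B s) = (\<Pi>\<^sub>E s\<in>S. g s <#\<^bsub>G s\<^esub> B s)"
  using set_mult_PiE_product_group[of S G "\<lambda>s. {g s}" B]
  by (simp add: l_coset_eq_set_mult PiE_singleton[OF assms])

definition product_single :: "'a set \<Rightarrow> ('a \<Rightarrow> ('b, 'c) monoid_scheme) \<Rightarrow> 'a \<Rightarrow> 'b \<Rightarrow> 'a \<Rightarrow> 'b" where
  "product_single S G q y = (\<lambda>s\<in>S. if s = q then y else \<one>\<^bsub>G s\<^esub>)"

lemma group_hom_product_single:
  assumes "\<And>s. s \<in> S \<Longrightarrow> group (G s)" and "q \<in> S"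
  shows "group_hom (G q) (product_group S G) (product_single S G q)"
  unfolding group_hom_def group_hom_axioms_def
  using assms by (auto simp: hom_def product_single_def PiE_iff group.is_monoid)

lemma PiE_subset_subgroup_product_group:
  assumes "finite S" and grp: "\<And>s. s \<in> S \<Longrightarrow> group (G s)"
    and H: "subgroup H (product_group S G)"
    and C: "\<And>s. s \<in> S \<Longrightarrow> C s \<subseteq> carrier (G s)"
    and single: "\<And>q y. q \<in> S \<Longrightarrow> y \<in> C q \<Longrightarrow> product_single S G q y \<in> H"
  shows "(\<Pi>\<^sub>E s\<in>S. C s) \<subseteq> H"
proof
  fix x assume x: "x \<in> (\<Pi>\<^sub>E s\<in>S. C s)"
  have xc: "x s \<in> carrier (G s)" if "s \<in> S" for s
    using x C that by blast
  have "(\<lambda>s\<in>S. if s \<in> T then x s else \<one>\<^bsub>G s\<^esub>) \<in> H" if "T \<subseteq> S" for T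
    using finite_subset[OF that \<open>finite S\<close>] that
  proof (induction T rule: finite_induct)
    case empty
    then show ?case using subgroup.one_closed[OF H] by (simp add: restrict_def)
  next
    case (insert q T)
    have eq: "(\<lambda>s\<in>S. if s \<in> insert q T then x s else \<one>\<^bsub>G s\<^esub>)
        = (\<lambda>s\<in>S. if s \<in> T then x s else \<one>\<^bsub>G s\<^esub>) \<otimes>\<^bsub>product_group S G\<^esub> product_single S G q (x q)"
      using insert.hyps x
      by (auto simp: product_single_def fun_eq_iff PiE_iff xc grp group.is_monoid monoid.l_one monoid.r_one)
    have "(\<lambda>s\<in>S. if s \<in> T then x s else \<one>\<^bsub>G s\<^esub>) \<otimes>\<^bsub>product_group S G\<^esub> product_single S G q (x q) \<in> H"
      using insert.IH insert.prems x single by (intro subgroup.m_closed[OF H]) (auto simp: PiE_iff restrict_def)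
    then show ?case
      unfolding eq .
  qed
  moreover have "(\<lambda>s\<in>S. if s \<in> S then x s else \<one>\<^bsub>G s\<^esub>) = x"
    using x by (auto simp: PiE_iff extensional_def fun_eq_iff)
  ultimately show "x \<in> H"
    by (metis order_refl)
qed

lemma generate_Un_PiE_product_group:
  assumes "finite S" and grp: "\<And>s. s \<in> S \<Longrightarrow> group (G s)"
    and A: "\<And>s. s \<in> S \<Longrightarrow> subgroup (A s) (G s)" and B: "\<And>s. s \<in> S \<Longrightarrow> subgroup (B s) (G s)"
  shows "generate (product_group S G) ((\<Pi>\<^sub>E s\<in>S. A s) \<union> (\<Pi>\<^sub>E s\<in>S. B s))
       = (\<Pi>\<^sub>E s\<in>S. generate (G s) (A s \<union> B s))"
proof
  let ?P = "product_group S G"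
  have P: "group ?P" using grp by simp
  have AB: "A s \<union> B s \<subseteq> carrier (G s)" if "s \<in> S" for s
    using A B subgroup.subset that by blast
  have AB_P: "(\<Pi>\<^sub>E s\<in>S. A s) \<union> (\<Pi>\<^sub>E s\<in>S. B s) \<subseteq> carrier ?P"
    using AB by (auto simp: PiE_iff)
  show "generate ?P ((\<Pi>\<^sub>E s\<in>S. A s) \<union> (\<Pi>\<^sub>E s\<in>S. B s)) \<subseteq> (\<Pi>\<^sub>E s\<in>S. generate (G s) (A s \<union> B s))"
  proof (rule group.generate_subgroup_incl[OF P])
    show "subgroup (\<Pi>\<^sub>E s\<in>S. generate (G s) (A s \<union> B s)) ?P"
      using grp AB by (simp add: PiE_subgroup_product_group group.generate_is_subgroup)
    show "(\<Pi>\<^sub>E s\<in>S. A s) \<union> (\<Pi>\<^sub>E s\<in>S. B s) \<subseteq> (\<Pi>\<^sub>E s\<in>S. generate (G s) (A s \<union> B s))"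
      by (auto simp: PiE_iff intro: generate.incl)
  qed
  show "(\<Pi>\<^sub>E s\<in>S. generate (G s) (A s \<union> B s)) \<subseteq> generate ?P ((\<Pi>\<^sub>E s\<in>S. A s) \<union> (\<Pi>\<^sub>E s\<in>S. B s))"
  proof (rule PiE_subset_subgroup_product_group[OF \<open>finite S\<close> grp])
    show "subgroup (generate ?P ((\<Pi>\<^sub>E s\<in>S. A s) \<union> (\<Pi>\<^sub>E s\<in>S. B s))) ?P"
      by (rule group.generate_is_subgroup[OF P AB_P])
    show "generate (G s) (A s \<union> B s) \<subseteq> carrier (G s)" if "s \<in> S" for s
      using group.generate_incl[OF grp AB] that by blast
  next
    fix q y assume q: "q \<in> S" and y: "y \<in> generate (G q) (A q \<union> B q)"
    have "\<one>\<^bsub>G s\<^esub> \<in> A s" "\<one>\<^bsub>G s\<^esub> \<in> B s" if "s \<in> S" for s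
      using A B that subgroup.one_closed by blast+
    then have single_AB: "product_single S G q ` (A q \<union> B q) \<subseteq> (\<Pi>\<^sub>E s\<in>S. A s) \<union> (\<Pi>\<^sub>E s\<in>S. B s)"
      unfolding image_Un by (intro Un_mono) (auto simp: product_single_def PiE_iff)
    have "group_hom (G q) ?P (product_single S G q)"
      using grp q by (rule group_hom_product_single)
    then have "product_single S G q y \<in> generate ?P (product_single S G q ` (A q \<union> B q))"
      using y by (simp add: group_hom.generate_img[OF _ AB[OF q]])
    then show "product_single S G q y \<in> generate ?P ((\<Pi>\<^sub>E s\<in>S. A s) \<union> (\<Pi>\<^sub>E s\<in>S. B s))"
      using group.mono_generate[OF P single_AB] by blast
  qed
qed

lemma subgroup_Ktau:
  assumes "group G" "\<And>i. i \<in> \<tau> \<Longrightarrow> subgroup (K i) G"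
  shows "subgroup (Ktau G K \<tau>) G"
  using assms subgroup_Inter[of "K ` \<tau>" G] by (auto simp: Ktau_def group.subgroup_self)

lemma Ktau_reindex: "Ktau G (\<lambda>i. K (p i)) \<tau> = Ktau G K (p ` \<tau>)"
  by (simp add: Ktau_def image_image)

lemma Ktau_product_group:
  "Ktau (product_group S G) (\<lambda>i. \<Pi>\<^sub>E s\<in>S. K s i) \<tau> = (\<Pi>\<^sub>E s\<in>S. Ktau (G s) (K s) \<tau>)"
  by (auto simp: Ktau_def PiE_iff)

lemma
  assumes "subgroup_geometry_system G I K"
  shows subgroup_geometry_system_group: "group G"
    and subgroup_geometry_system_finite: "finite I"
    and subgroup_geometry_system_subgroup: "i \<in> I \<Longrightarrow> subgroup (K i) G"
    and subgroup_geometry_system_generate: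
      "\<tau> \<subseteq> I \<Longrightarrow> \<tau>' \<subseteq> I \<Longrightarrow> Ktau G K (\<tau> \<inter> \<tau>') = generate G (Ktau G K \<tau> \<union> Ktau G K \<tau>')"
    and subgroup_geometry_system_set_mult:
      "\<tau> \<subset> I \<Longrightarrow> i \<in> I - \<tau> \<Longrightarrow>
        Ktau G K \<tau> <#>\<^bsub>G\<^esub> K i = carrier G \<inter> (\<Inter>j\<in>\<tau>. K j <#>\<^bsub>G\<^esub> K i)"
    and subgroup_geometry_system_Ktau_neq: "i \<in> I \<Longrightarrow> Ktau G K I \<noteq> Ktau G K (I - {i})"
  using assms by (auto simp: subgroup_geometry_system_def)

lemma subgroup_geometry_system_reindex:
  assumes sgs: "subgroup_geometry_system G I K" and p: "p permutes I"
  shows "subgroup_geometry_system G I (\<lambda>i. K (p i))"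
  unfolding subgroup_geometry_system_def
proof (intro conjI allI impI ballI)
  have pI: "p ` \<tau> \<subseteq> I" if "\<tau> \<subseteq> I" for \<tau>
    using that permutes_in_image[OF p] by blast
  show "group G" "finite I"
    using sgs by (rule subgroup_geometry_system_group subgroup_geometry_system_finite)+
  show "subgroup (K (p i)) G" if "i \<in> I" for i
    using sgs that permutes_in_image[OF p] by (simp add: subgroup_geometry_system_subgroup)
  show "Ktau G (\<lambda>i. K (p i)) (\<tau> \<inter> \<tau>')
      = generate G (Ktau G (\<lambda>i. K (p i)) \<tau> \<union> Ktau G (\<lambda>i. K (p i)) \<tau>')"
    if "\<tau> \<subseteq> I" "\<tau>' \<subseteq> I" for \<tau> \<tau>'
    using subgroup_geometry_system_generate[OF sgs pI[OF that(1)] pI[OF that(2)]]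
    by (simp add: Ktau_reindex image_Int[OF permutes_inj[OF p]])
  show "Ktau G (\<lambda>i. K (p i)) \<tau> <#>\<^bsub>G\<^esub> K (p i)
      = carrier G \<inter> (\<Inter>j\<in>\<tau>. K (p j) <#>\<^bsub>G\<^esub> K (p i))"
    if "\<tau> \<subset> I" "i \<in> I - \<tau>" for \<tau> i
  proof -
    have "p i \<notin> p ` \<tau>"
      using that inj_image_mem_iff[OF permutes_inj[OF p]] by blast
    moreover have "p i \<in> I"
      using that permutes_in_image[OF p] by blast
    ultimately have "p ` \<tau> \<subset> I" "p i \<in> I - p ` \<tau>"
      using pI[of \<tau>] that by blast+
    from subgroup_geometry_system_set_mult[OF sgs this] show ?thesis
      by (simp add: Ktau_reindex image_image)
  qed
  show "Ktau G (\<lambda>i. K (p i)) I \<noteq> Ktau G (\<lambda>i. K (p i)) (I - {i})" if "i \<in> I" for i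
  proof -
    have "p ` (I - {i}) = I - {p i}"
      by (simp add: image_set_diff[OF permutes_inj[OF p]] permutes_image[OF p])
    then show ?thesis
      using subgroup_geometry_system_Ktau_neq[OF sgs] that permutes_in_image[OF p]
      by (simp add: Ktau_reindex permutes_image[OF p])
  qed
qed

lemma subgroup_geometry_system_product_group:
  assumes "finite S" "S \<noteq> {}"
    and sgs: "\<And>s. s \<in> S \<Longrightarrow> subgroup_geometry_system (G s) I (K s)"
  shows "subgroup_geometry_system (product_group S G) I (\<lambda>i. \<Pi>\<^sub>E s\<in>S. K s i)"
  unfolding subgroup_geometry_system_def Ktau_product_group
proof (intro conjI allI impI ballI)
  let ?P = "product_group S G"
  have grp: "group (G s)" if "s \<in> S" for s
    using sgs[OF that] by (rule subgroup_geometry_system_group)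
  have sub: "subgroup (K s i) (G s)" if "s \<in> S" "i \<in> I" for s i
    using sgs[OF that(1)] that(2) by (rule subgroup_geometry_system_subgroup)
  have sub_Ktau: "subgroup (Ktau (G s) (K s) \<tau>) (G s)" if "s \<in> S" "\<tau> \<subseteq> I" for s \<tau>
    using that grp sub by (intro subgroup_Ktau) auto
  show "group ?P"
    using grp by simp
  show "finite I"
    using \<open>S \<noteq> {}\<close> sgs subgroup_geometry_system_finite by blast
  show "subgroup (\<Pi>\<^sub>E s\<in>S. K s i) ?P" if "i \<in> I" for i
    using grp sub that by (simp add: PiE_subgroup_product_group)
  show "(\<Pi>\<^sub>E s\<in>S. Ktau (G s) (K s) (\<tau> \<inter> \<tau>'))
      = generate ?P ((\<Pi>\<^sub>E s\<in>S. Ktau (G s) (K s) \<tau>) \<union> (\<Pi>\<^sub>E s\<in>S. Ktau (G s) (K s) \<tau>'))"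
    if "\<tau> \<subseteq> I" "\<tau>' \<subseteq> I" for \<tau> \<tau>'
  proof -
    have "generate ?P ((\<Pi>\<^sub>E s\<in>S. Ktau (G s) (K s) \<tau>) \<union> (\<Pi>\<^sub>E s\<in>S. Ktau (G s) (K s) \<tau>'))
        = (\<Pi>\<^sub>E s\<in>S. generate (G s) (Ktau (G s) (K s) \<tau> \<union> Ktau (G s) (K s) \<tau>'))"
      using that grp sub_Ktau by (intro generate_Un_PiE_product_group \<open>finite S\<close>)
    also have "\<dots> = (\<Pi>\<^sub>E s\<in>S. Ktau (G s) (K s) (\<tau> \<inter> \<tau>'))"
      using that by (intro PiE_cong) (simp add: subgroup_geometry_system_generate[OF sgs])
    finally show ?thesis
      by (rule sym)
  qed
  show "(\<Pi>\<^sub>E s\<in>S. Ktau (G s) (K s) \<tau>) <#>\<^bsub>?P\<^esub> (\<Pi>\<^sub>E s\<in>S. K s i)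
      = carrier ?P \<inter> (\<Inter>j\<in>\<tau>. (\<Pi>\<^sub>E s\<in>S. K s j) <#>\<^bsub>?P\<^esub> (\<Pi>\<^sub>E s\<in>S. K s i))"
    if "\<tau> \<subset> I" "i \<in> I - \<tau>" for \<tau> i
  proof -
    have "(\<Pi>\<^sub>E s\<in>S. Ktau (G s) (K s) \<tau>) <#>\<^bsub>?P\<^esub> (\<Pi>\<^sub>E s\<in>S. K s i)
        = (\<Pi>\<^sub>E s\<in>S. carrier (G s) \<inter> (\<Inter>j\<in>\<tau>. K s j <#>\<^bsub>G s\<^esub> K s i))"
      unfolding set_mult_PiE_product_group
      using that by (intro PiE_cong) (simp add: subgroup_geometry_system_set_mult[OF sgs])
    also have "\<dots> = carrier ?P \<inter> (\<Inter>j\<in>\<tau>. \<Pi>\<^sub>E s\<in>S. K s j <#>\<^bsub>G s\<^esub> K s i)"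
      by (auto simp: PiE_iff)
    finally show ?thesis
      by (simp add: set_mult_PiE_product_group)
  qed
  show "(\<Pi>\<^sub>E s\<in>S. Ktau (G s) (K s) I) \<noteq> (\<Pi>\<^sub>E s\<in>S. Ktau (G s) (K s) (I - {i}))" if "i \<in> I" for i
  proof -
    have "Ktau (G s) (K s) \<tau> \<noteq> {}" if "s \<in> S" "\<tau> \<subseteq> I" for s \<tau>
      using subgroup.one_closed[OF sub_Ktau[OF that]] by blast
    then show ?thesis
      using \<open>S \<noteq> {}\<close> \<open>i \<in> I\<close> subgroup_geometry_system_Ktau_neq[OF sgs]
      by (auto simp: PiE_eq_iff_not_empty)
  qed
qed

lemma inj_on_UN_bij_betw_mem_iff:
  assumes "bij_betw \<phi> (A i) (B i)" "inj_on \<phi> (\<Union>i\<in>I. A i)" "i \<in> I" "u \<in> (\<Union>i\<in>I. A i)"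
  shows "\<phi> u \<in> B i \<longleftrightarrow> u \<in> A i"
proof
  assume "\<phi> u \<in> B i"
  then obtain w where "w \<in> A i" "\<phi> u = \<phi> w"
    using assms(1) by (auto simp: bij_betw_def)
  then show "u \<in> A i"
    using assms(2-4) by (metis UN_I inj_onD)
qed (use assms(1) in \<open>auto simp: bij_betw_def\<close>)

lemma partite_iso_adjacent:
  assumes "partite_iso I Gr Hr \<phi>" "u \<in> (\<Union>i\<in>I. fst Gr i)" "v \<in> (\<Union>i\<in>I. fst Gr i)"
  shows "snd Gr u v \<longleftrightarrow> snd Hr (\<phi> u) (\<phi> v)"
  using assms unfolding partite_iso_def by blast

lemma partite_iso_trans:
  assumes \<phi>: "partite_iso I Gr Hr \<phi>" and \<psi>: "partite_iso I Hr Jr \<psi>"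
  shows "partite_iso I Gr Jr (\<psi> \<circ> \<phi>)"
proof -
  have "\<phi> ` fst Gr i = fst Hr i" if "i \<in> I" for i
    using \<phi> that by (simp add: partite_iso_def bij_betw_def)
  then have image: "\<phi> ` (\<Union>i\<in>I. fst Gr i) = (\<Union>i\<in>I. fst Hr i)"
    unfolding image_UN by (intro SUP_cong) auto
  show ?thesis
    unfolding partite_iso_def
  proof (intro conjI ballI)
    show "bij_betw (\<psi> \<circ> \<phi>) (fst Gr i) (fst Jr i)" if "i \<in> I" for i
      using \<phi> \<psi> that by (auto simp: partite_iso_def intro: bij_betw_trans)
    show "inj_on (\<psi> \<circ> \<phi>) (\<Union>i\<in>I. fst Gr i)"
      using \<phi> \<psi> by (intro comp_inj_on) (auto simp: partite_iso_def image)
    show "snd Gr u v \<longleftrightarrow> snd Jr ((\<psi> \<circ> \<phi>) u) ((\<psi> \<circ> \<phi>) v)"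
      if "u \<in> (\<Union>i\<in>I. fst Gr i)" "v \<in> (\<Union>i\<in>I. fst Gr i)" for u v
    proof -
      have "\<phi> u \<in> (\<Union>i\<in>I. fst Hr i)" "\<phi> v \<in> (\<Union>i\<in>I. fst Hr i)"
        using that image by blast+
      then show ?thesis
        using partite_iso_adjacent[OF \<phi> that] partite_iso_adjacent[OF \<psi>] by simp
    qed
  qed
qed

lemma partite_iso_partite_prod:
  assumes iso: "\<And>s. s \<in> S \<Longrightarrow> partite_iso I (Gr s) (Hr s) (\<phi> s)"
  shows "partite_iso I (partite_prod I S Gr) (partite_prod I S Hr) (\<lambda>u. \<lambda>s\<in>S. \<phi> s (u s))"
    (is "partite_iso I ?Gr ?Hr ?\<phi>")
proof -
  have bij: "bij_betw ?\<phi> (fst ?Gr i) (fst ?Hr i)" if "i \<in> I" for i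
    using iso that by (auto simp: partite_prod_def partite_iso_def intro: bij_betw_PiE)
  have inj: "inj_on ?\<phi> (\<Union>i\<in>I. fst ?Gr i)"
  proof (rule inj_onI)
    fix u v assume "u \<in> (\<Union>i\<in>I. fst ?Gr i)" "v \<in> (\<Union>i\<in>I. fst ?Gr i)" and eq: "?\<phi> u = ?\<phi> v"
    then obtain i j where u: "i \<in> I" "u \<in> (\<Pi>\<^sub>E s\<in>S. fst (Gr s) i)"
      and v: "j \<in> I" "v \<in> (\<Pi>\<^sub>E s\<in>S. fst (Gr s) j)"
      by (auto simp: partite_prod_def)
    have "u s = v s" if "s \<in> S" for s
      using iso[OF that] fun_cong[OF eq, of s] u v that
      by (auto simp: partite_iso_def inj_on_def PiE_iff)
    then show "u = v"
      using u v by (intro extensionalityI[where A=S]) (auto simp: PiE_iff)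
  qed
  have "snd ?Gr u v \<longleftrightarrow> snd ?Hr (?\<phi> u) (?\<phi> v)"
    if u: "u \<in> (\<Union>i\<in>I. fst ?Gr i)" and v: "v \<in> (\<Union>i\<in>I. fst ?Gr i)" for u v
  proof -
    have parts: "(\<exists>i\<in>I. \<exists>j\<in>I. i \<noteq> j \<and> u \<in> fst ?Gr i \<and> v \<in> fst ?Gr j)
        \<longleftrightarrow> (\<exists>i\<in>I. \<exists>j\<in>I. i \<noteq> j \<and> ?\<phi> u \<in> fst ?Hr i \<and> ?\<phi> v \<in> fst ?Hr j)"
    proof -
      have "?\<phi> w \<in> fst ?Hr i \<longleftrightarrow> w \<in> fst ?Gr i" if "i \<in> I" "w \<in> (\<Union>i\<in>I. fst ?Gr i)" for i w
        using inj_on_UN_bij_betw_mem_iff[where A="fst ?Gr" and B="fst ?Hr", OF bij[OF that(1)] inj that] .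
      then show ?thesis
        using u v by blast
    qed
    have "u s \<in> (\<Union>i\<in>I. fst (Gr s) i)" "v s \<in> (\<Union>i\<in>I. fst (Gr s) i)" if "s \<in> S" for s
      using u v that by (auto simp: partite_prod_def)
    then have "(\<forall>s\<in>S. snd (Gr s) (u s) (v s)) \<longleftrightarrow> (\<forall>s\<in>S. snd (Hr s) (\<phi> s (u s)) (\<phi> s (v s)))"
      using partite_iso_adjacent[OF iso] by simp
    with parts show ?thesis
      by (simp add: partite_prod_def)
  qed
  with bij inj show ?thesis
    by (simp add: partite_iso_def)
qed

lemma coset_graph_part: "fst (coset_graph G K) i = (\<lambda>g. (i, g <#\<^bsub>G\<^esub> K i)) ` carrier G"
  by (simp add: coset_graph_def Setcompr_eq_image)

lemma coset_graph_adjacent: "snd (coset_graph G K) u v \<longleftrightarrow> fst u \<noteq> fst v \<and> snd u \<inter> snd v \<noteq> {}"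
  by (simp add: coset_graph_def)

text \<open>\<open>relabel p\<close> leaves the tag \<open>p i\<close> on the vertices of part \<open>i\<close>, so the tags are translated back
  by the inverse of \<open>p\<close>.\<close>

lemma partite_iso_relabel_coset_graph:
  assumes "bij p"
  shows "partite_iso I (relabel p (coset_graph G K)) (coset_graph G (\<lambda>i. K (p i)))
      (\<lambda>(k, C). (inv_into UNIV p k, C))"
    (is "partite_iso I ?Gr ?Hr ?\<phi>")
proof -
  have inj: "inj ?\<phi>"
    using bij_imp_bij_inv[OF assms] by (auto simp: inj_def bij_def)
  have "?\<phi> ` fst ?Gr i = fst ?Hr i" for i
    by (simp add: relabel_def coset_graph_part image_image inv_f_f[OF bij_is_inj[OF assms]])
  moreover have "snd ?Gr u v \<longleftrightarrow> snd ?Hr (?\<phi> u) (?\<phi> v)" for u v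
    using bij_is_inj[OF bij_imp_bij_inv[OF assms]]
    by (auto simp: relabel_def coset_graph_adjacent split: prod.split dest: injD)
  ultimately show ?thesis
    unfolding partite_iso_def bij_betw_def using inj_on_subset[OF inj subset_UNIV] by blast
qed

lemma partite_iso_partite_prod_coset_graph:
  assumes "s\<^sub>0 \<in> S" and grp: "\<And>s. s \<in> S \<Longrightarrow> group (G s)"
    and sub: "\<And>s i. s \<in> S \<Longrightarrow> i \<in> I \<Longrightarrow> subgroup (K s i) (G s)"
  shows "partite_iso I (partite_prod I S (\<lambda>s. coset_graph (G s) (K s)))
      (coset_graph (product_group S G) (\<lambda>i. \<Pi>\<^sub>E s\<in>S. K s i))
      (\<lambda>u. (fst (u s\<^sub>0), \<Pi>\<^sub>E s\<in>S. snd (u s)))"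
    (is "partite_iso I ?Gr ?Hr ?\<phi>")
proof -
  define vertex where "vertex i g = (\<lambda>s\<in>S. (i, g s <#\<^bsub>G s\<^esub> K s i))" for i g
  have parts: "fst ?Gr i = vertex i ` carrier (product_group S G)" for i
    by (simp add: partite_prod_def coset_graph_part PiE_image vertex_def)
  have \<phi>_vertex: "?\<phi> (vertex i g) = (i, \<Pi>\<^sub>E s\<in>S. g s <#\<^bsub>G s\<^esub> K s i)" for i g
    using \<open>s\<^sub>0 \<in> S\<close> by (simp add: vertex_def cong: PiE_cong)
  have coset_ne: "g s <#\<^bsub>G s\<^esub> K s i \<noteq> {}" if "g \<in> carrier (product_group S G)" "s \<in> S" "i \<in> I" for g s i
  proof -
    have "g s \<in> carrier (G s)"
      using that by (auto simp: PiE_iff)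
    then show ?thesis
      using group.lcos_self[OF grp[OF that(2)] _ sub[OF that(2,3)]] by blast
  qed
  have image: "?\<phi> ` fst ?Gr i = fst ?Hr i" for i
    unfolding parts coset_graph_part image_image \<phi>_vertex
    by (intro image_cong refl) (simp add: l_coset_PiE_product_group PiE_iff)
  have inj: "inj_on ?\<phi> (\<Union>i\<in>I. fst ?Gr i)"
  proof (rule inj_onI)
    fix u v assume "u \<in> (\<Union>i\<in>I. fst ?Gr i)" "v \<in> (\<Union>i\<in>I. fst ?Gr i)" and eq: "?\<phi> u = ?\<phi> v"
    then obtain i j g h where ij: "i \<in> I" "j \<in> I" and gh: "g \<in> carrier (product_group S G)" "h \<in> carrier (product_group S G)"
      and uv: "u = vertex i g" "v = vertex j h"
      unfolding parts by blast
    have "i = j" "(\<Pi>\<^sub>E s\<in>S. g s <#\<^bsub>G s\<^esub> K s i) = (\<Pi>\<^sub>E s\<in>S. h s <#\<^bsub>G s\<^esub> K s j)"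
      using eq by (auto simp: uv \<phi>_vertex)
    then have "\<forall>s\<in>S. g s <#\<^bsub>G s\<^esub> K s i = h s <#\<^bsub>G s\<^esub> K s j"
      using coset_ne gh ij by (simp add: PiE_eq_iff_not_empty)
    then show "u = v"
      using \<open>i = j\<close> by (simp add: uv vertex_def cong: restrict_cong)
  qed
  have adjacent: "snd ?Gr u v \<longleftrightarrow> snd ?Hr (?\<phi> u) (?\<phi> v)"
    if vertices: "u \<in> (\<Union>i\<in>I. fst ?Gr i)" "v \<in> (\<Union>i\<in>I. fst ?Gr i)" for u v
  proof -
    obtain i j g h where ij: "i \<in> I" "j \<in> I" and gh: "g \<in> carrier (product_group S G)" "h \<in> carrier (product_group S G)"
      and uv: "u = vertex i g" "v = vertex j h"
      using vertices unfolding parts by blast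
    have mem: "u \<in> fst ?Gr i" "v \<in> fst ?Gr j"
      using gh by (simp_all add: uv parts)
    have "snd ?Gr u v \<longleftrightarrow> (\<exists>i'\<in>I. \<exists>j'\<in>I. i' \<noteq> j' \<and> u \<in> fst ?Gr i' \<and> v \<in> fst ?Gr j')
        \<and> (\<forall>s\<in>S. snd (coset_graph (G s) (K s)) (u s) (v s))"
      by (simp add: partite_prod_def)
    also have "\<dots> \<longleftrightarrow> i \<noteq> j \<and> (\<forall>s\<in>S. (g s <#\<^bsub>G s\<^esub> K s i) \<inter> (h s <#\<^bsub>G s\<^esub> K s j) \<noteq> {})"
      using ij mem \<open>s\<^sub>0 \<in> S\<close> by (auto simp: coset_graph_adjacent uv vertex_def)
    also have "\<dots> \<longleftrightarrow> snd ?Hr (?\<phi> u) (?\<phi> v)"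
      by (simp add: coset_graph_adjacent uv \<phi>_vertex PiE_Int PiE_eq_empty_iff)
    finally show ?thesis .
  qed
  show ?thesis
    unfolding partite_iso_def bij_betw_def
    using image inj adjacent inj_on_subset[OF inj] by blast
qed

theorem mainTheorem13:
  fixes G :: "('g, 'b) monoid_scheme" and I :: "'i set" and K :: "'i \<Rightarrow> 'g set" and n :: nat
  assumes "finite I" and "card I = Suc n"
    and "subgroup_geometry_system G I K"
  defines "S \<equiv> {p. p permutes I}"
  defines "GS \<equiv> product_group S (\<lambda>_. G)"
  defines "KS \<equiv> (\<lambda>i. \<Pi>\<^sub>E p\<in>S. K (p i))"
  shows "(\<exists>\<phi>. partite_iso I (symmetrization I (coset_graph G K)) (coset_graph GS KS) \<phi>)
         \<and> subgroup_geometry_system GS I KS"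
proof -
  \<comment> \<open>\<open>card I = Suc n\<close> only names the exponent: \<open>card S = (n + 1)!\<close>.\<close>
  have "finite S" "id \<in> S"
    using \<open>finite I\<close> by (simp_all add: S_def finite_permutations)
  have sgs: "subgroup_geometry_system G I (\<lambda>i. K (p i))" if "p \<in> S" for p
    using assms(3) that by (simp add: S_def subgroup_geometry_system_reindex)
  have "partite_iso I (symmetrization I (coset_graph G K)) (partite_prod I S (\<lambda>p. coset_graph G (\<lambda>i. K (p i))))
      (\<lambda>u. \<lambda>p\<in>S. (\<lambda>(k, C). (inv_into UNIV p k, C)) (u p))"
    unfolding symmetrization_def S_def[symmetric]
    by (rule partite_iso_partite_prod) (simp add: S_def partite_iso_relabel_coset_graph permutes_bij)
  moreover have "partite_iso I (partite_prod I S (\<lambda>p. coset_graph G (\<lambda>i. K (p i)))) (coset_graph GS KS)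
      (\<lambda>u. (fst (u id), \<Pi>\<^sub>E p\<in>S. snd (u p)))"
    unfolding GS_def KS_def
    by (rule partite_iso_partite_prod_coset_graph[OF \<open>id \<in> S\<close>])
      (simp_all add: subgroup_geometry_system_group[OF sgs] subgroup_geometry_system_subgroup[OF sgs])
  ultimately have "partite_iso I (symmetrization I (coset_graph G K)) (coset_graph GS KS)
      ((\<lambda>u. (fst (u id), \<Pi>\<^sub>E p\<in>S. snd (u p))) \<circ> (\<lambda>u. \<lambda>p\<in>S. (\<lambda>(k, C). (inv_into UNIV p k, C)) (u p)))"
    by (rule partite_iso_trans)
  moreover have "subgroup_geometry_system GS I KS"
    unfolding GS_def KS_def
    using \<open>finite S\<close> \<open>id \<in> S\<close> sgs by (intro subgroup_geometry_system_product_group) auto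
  ultimately show ?thesis
    by blast
qed

end
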